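(* Let $1\to N\to G\to Q\to1$ be a short exact sequence of groups. If $G$ is SQ-universal, then $N$ or $Q$ is SQ-universal.
   Context: A group $G$ is SQ-universal if every countable group embeds in some quotient of $G$. *)

theory Defs
  imports "HOL-Algebra.Algebra"
begin

text \<open>Every countable group is isomorphic to a group whose carrier is a subset of the
  natural numbers; conversely such groups are countable. Hence quantifying over groups
  of type nat monoid is quantifying over all countable groups up to isomorphism.\<close>

definition SQ_universal :: "('a, 'b) monoid_scheme \<Rightarrow> bool" where
  "SQ_universal G \<longleftrightarrow>
     (\<forall>H :: nat monoid. group H \<longrightarrow>
        (\<exists>K h. K \<lhd> G \<and> h \<in> hom H (G Mod K) \<and> inj_on h (carrier H)))"

definition short_exact ::
  "('a, 'x) monoid_scheme \<Rightarrow> ('b, 'y) monoid_scheme \<Rightarrow> ('c, 'z) monoid_scheme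
   \<Rightarrow> ('a \<Rightarrow> 'b) \<Rightarrow> ('b \<Rightarrow> 'c) \<Rightarrow> bool" where
  "short_exact N G Q i p \<longleftrightarrow>
     group N \<and> group G \<and> group Q \<and>
     i \<in> hom N G \<and> inj_on i (carrier N) \<and>
     p \<in> hom G Q \<and> p ` carrier G = carrier Q \<and>
     i ` carrier N = kernel G Q p"

end

theory Submission
  imports Defs "HOL-Library.Countable_Set"
begin

text \<open>Suppose neither \<open>N\<close> nor \<open>Q\<close> is SQ-universal, witnessed by countable groups \<open>A\<close> and \<open>B\<close>
  that embed in no quotient of \<open>N\<close> and of \<open>Q\<close> respectively. A countable group \<open>H\<close> of
  permutations of \<open>A \<times> B \<times> \<int>\<close> contains copies of \<open>A\<close> and \<open>B\<close> such that the normal closure of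
  every nontrivial element of \<open>B\<close> contains \<open>A\<close>. Embed \<open>H\<close> into a quotient \<open>G/K\<close>. The image
  \<open>W\<close> of \<open>N\<close> in \<open>G/K\<close> is the kernel of \<open>G/K \<rightarrow> Q/p(K)\<close>; as \<open>B\<close> does not embed in \<open>Q/p(K)\<close>,
  some nontrivial element of \<open>B\<close> lies in \<open>W\<close>, hence \<open>A \<subseteq> W\<close>. But \<open>W\<close> is a quotient of \<open>N\<close>.\<close>

definition commutator :: "('a, 'm) monoid_scheme \<Rightarrow> 'a \<Rightarrow> 'a \<Rightarrow> 'a" where
  "commutator G x y = x \<otimes>\<^bsub>G\<^esub> y \<otimes>\<^bsub>G\<^esub> inv\<^bsub>G\<^esub> x \<otimes>\<^bsub>G\<^esub> inv\<^bsub>G\<^esub> y"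

lemma (in group) commutator_closed:
  "x \<in> carrier G \<Longrightarrow> y \<in> carrier G \<Longrightarrow> commutator G x y \<in> carrier G"
  by (simp add: commutator_def)

lemma (in group) inv_commutator:
  "x \<in> carrier G \<Longrightarrow> y \<in> carrier G \<Longrightarrow> inv (commutator G x y) = commutator G y x"
  by (simp add: commutator_def inv_mult_group m_assoc)

lemma (in normal) commutator_mem:
  assumes "x \<in> carrier G" "h \<in> H"
  shows "commutator G x h \<in> H"
  using inv_op_closed2[OF assms] assms(2) by (simp add: commutator_def)

lemma (in monoid) foldr_mult_closed:
  "set xs \<subseteq> carrier G \<Longrightarrow> foldr (\<otimes>) xs \<one> \<in> carrier G"
  by (induction xs) auto

lemma (in monoid) foldr_mult_append:
  "set xs \<subseteq> carrier G \<Longrightarrow> set ys \<subseteq> carrier G \<Longrightarrow>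
     foldr (\<otimes>) (xs @ ys) \<one> = foldr (\<otimes>) xs \<one> \<otimes> foldr (\<otimes>) ys \<one>"
  by (induction xs) (auto simp: m_assoc foldr_mult_closed)

lemma (in group) countable_generate:
  assumes "countable A" "A \<subseteq> carrier G"
  shows "countable (generate G A)"
proof -
  let ?words = "lists (A \<union> m_inv G ` A)"
  have letters: "A \<union> m_inv G ` A \<subseteq> carrier G"
    using assms(2) by auto
  have "generate G A \<subseteq> (\<lambda>xs. foldr (\<otimes>) xs \<one>) ` ?words"
  proof
    fix x assume "x \<in> generate G A"
    then show "x \<in> (\<lambda>xs. foldr (\<otimes>) xs \<one>) ` ?words"
    proof induction
      case one
      show ?case by (auto intro!: image_eqI[of _ _ "[]"])
    next
      case (incl x)
      then show ?case using assms(2) by (auto intro!: image_eqI[of _ _ "[x]"])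
    next
      case (inv x)
      then show ?case using assms(2) by (auto intro!: image_eqI[of _ _ "[inv x]"])
    next
      case (eng x y)
      then obtain xs ys where xs: "xs \<in> ?words" "x = foldr (\<otimes>) xs \<one>"
        and ys: "ys \<in> ?words" "y = foldr (\<otimes>) ys \<one>"
        by blast
      have "set xs \<subseteq> carrier G" "set ys \<subseteq> carrier G"
        using xs(1) ys(1) letters by auto
      then have "x \<otimes> y = foldr (\<otimes>) (xs @ ys) \<one>"
        by (simp only: xs(2) ys(2) foldr_mult_append)
      moreover have "xs @ ys \<in> ?words"
        using xs(1) ys(1) by simp
      ultimately show ?case
        by (rule image_eqI)
    qed
  qed
  moreover have "countable ?words"
    using assms(1) by auto
  ultimately show ?thesis
    by (rule countable_subset[OF _ countable_image])
qed

lemma countable_group_iso_nat_monoid: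
  assumes "group H" "countable (carrier H)"
  obtains H' :: "nat monoid" and f where "group H'" "f \<in> iso H H'"
proof -
  interpret group H by fact
  define f where "f = to_nat_on (carrier H)"
  have inj: "inj_on f (carrier H)"
    unfolding f_def using assms(2) by (rule inj_on_to_nat_on)
  have morphism: "weak_group_morphism f {\<one>\<^bsub>H\<^esub>} H"
    using inj one_is_normal
    by (intro weak_group_morphismsI)
       (auto simp: inj_on_eq_iff, metis inv_closed inv_equality inv_inv)
  show thesis
  proof
    show "group (image_group f H)"
      using image_group_is_group[OF morphism] .
    show "f \<in> iso H (image_group f H)"
      using weak_group_morphism_is_hom[OF morphism] inj
      by (simp add: iso_def bij_betw_def image_group_carrier)
  qed
qed

definition embeds_in_quotient :: "('a, 'm) monoid_scheme \<Rightarrow> ('b, 'n) monoid_scheme \<Rightarrow> bool" where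
  "embeds_in_quotient H G \<longleftrightarrow>
     (\<exists>K h. K \<lhd> G \<and> h \<in> hom H (G Mod K) \<and> inj_on h (carrier H))"

lemma SQ_universal_iff_embeds_in_quotient:
  "SQ_universal G \<longleftrightarrow> (\<forall>H :: nat monoid. group H \<longrightarrow> embeds_in_quotient H G)"
  by (simp add: SQ_universal_def embeds_in_quotient_def)

lemma embeds_in_quotient_if_SQ_universal:
  assumes "SQ_universal G" "group H" "countable (carrier H)"
  shows "embeds_in_quotient H G"
proof -
  obtain H' :: "nat monoid" and f where "group H'" and f: "f \<in> iso H H'"
    using countable_group_iso_nat_monoid[OF assms(2,3)] .
  then obtain K h where "K \<lhd> G" "h \<in> hom H' (G Mod K)" "inj_on h (carrier H')"
    using assms(1) by (auto simp: SQ_universal_iff_embeds_in_quotient embeds_in_quotient_def)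
  moreover have "f \<in> hom H H'" "bij_betw f (carrier H) (carrier H')"
    using f by (auto simp: iso_def)
  ultimately have "K \<lhd> G \<and> h \<circ> f \<in> hom H (G Mod K) \<and> inj_on (h \<circ> f) (carrier H)"
    by (auto intro: hom_compose comp_inj_on simp: bij_betw_def)
  then show ?thesis
    unfolding embeds_in_quotient_def by blast
qed

lemma embeds_in_quotient_if_into_hom_image:
  assumes "group N" "group G"
    and f: "f \<in> hom N G"
    and h: "h \<in> hom B G" "inj_on h (carrier B)" "h ` carrier B \<subseteq> f ` carrier N"
  shows "embeds_in_quotient B N"
proof -
  let ?I = "subgroup_generated G (f ` carrier N)"
  interpret f: group_hom N G f
    using assms by (simp add: group_hom_def group_hom_axioms_def)
  have carrier_I: "carrier ?I = f ` carrier N"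
    by (rule subgroup.carrier_subgroup_generated_subgroup[OF f.img_is_subgroup])
  interpret fI: group_hom N ?I f
    using f by (simp add: group_hom_def group_hom_axioms_def hom_into_subgroup assms(1)
        f.H.group_subgroup_generated)
  define K where "K = kernel N ?I f"
  have iso: "(\<lambda>U. the_elem (f ` U)) \<in> iso (N Mod K) ?I"
    unfolding K_def using fI.FactGroup_iso_set carrier_I by simp
  have "K \<lhd> N"
    unfolding K_def by (rule fI.normal_kernel)
  then interpret NK: group "N Mod K"
    by (rule normal.factorgroup_is_group)
  obtain \<theta> where \<theta>: "\<theta> \<in> iso ?I (N Mod K)"
    using NK.iso_set_sym[OF iso] by blast
  have "h \<in> hom B ?I"
    using h(1,3) by (rule hom_into_subgroup)
  then have "\<theta> \<circ> h \<in> hom B (N Mod K)" "inj_on (\<theta> \<circ> h) (carrier B)"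
    using \<theta> h(2,3) carrier_I
    by (auto simp: iso_def bij_betw_def intro: hom_compose comp_inj_on inj_on_subset)
  with \<open>K \<lhd> N\<close> show ?thesis
    unfolding embeds_in_quotient_def by blast
qed

lemma short_exact_coset_in_image:
  assumes "short_exact N G Q i p" "K \<lhd> G" and g: "g \<in> carrier G" "p g \<in> p ` K"
  shows "K #>\<^bsub>G\<^esub> g \<in> (\<lambda>n. K #>\<^bsub>G\<^esub> i n) ` carrier N"
proof -
  interpret K: normal K G by fact
  interpret p: group_hom G Q p
    using assms(1) by (simp add: short_exact_def group_hom_def group_hom_axioms_def)
  obtain k where k: "k \<in> K" "p g = p k"
    using g(2) by blast
  have k_carrier: "k \<in> carrier G"
    using k(1) K.subset by blast
  have "inv\<^bsub>G\<^esub> k \<otimes>\<^bsub>G\<^esub> g \<in> kernel G Q p"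
    using g(1) k k_carrier by (simp add: kernel_def p.hom_mult p.hom_inv)
  then obtain n where n: "n \<in> carrier N" "i n = inv\<^bsub>G\<^esub> k \<otimes>\<^bsub>G\<^esub> g"
    using assms(1) unfolding short_exact_def by (metis imageE)
  have "K #>\<^bsub>G\<^esub> g = K #>\<^bsub>G\<^esub> (k \<otimes>\<^bsub>G\<^esub> i n)"
    using n(2) k_carrier g(1) by (simp add: K.m_assoc[symmetric])
  also have "\<dots> = (K #>\<^bsub>G\<^esub> k) #>\<^bsub>G\<^esub> i n"
    using K.subset k_carrier n(2) g(1) by (simp add: K.coset_mult_assoc)
  also have "\<dots> = K #>\<^bsub>G\<^esub> i n"
    using K.rcos_const[OF K.is_group k(1)] by simp
  finally show ?thesis
    using n(1) by blast
qed

lemma short_exact_quotient_hom: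
  assumes "short_exact N G Q i p" "K \<lhd> G"
  obtains L \<psi> where "L \<lhd> Q" "\<psi> \<in> hom (G Mod K) (Q Mod L)"
    "kernel (G Mod K) (Q Mod L) \<psi> \<subseteq> (\<lambda>n. K #>\<^bsub>G\<^esub> i n) ` carrier N"
proof -
  interpret K: normal K G by fact
  interpret p: group_hom G Q p
    using assms(1) by (simp add: short_exact_def group_hom_def group_hom_axioms_def)
  have p_onto: "p ` carrier G = carrier Q"
    using assms(1) by (simp add: short_exact_def)
  let ?L = "p ` K"
  have "?L \<lhd> Q"
    using K.surj_hom_normal_subgroup[OF p.group_hom_axioms p_onto] .
  then interpret L: normal ?L Q .
  interpret \<pi>: group_hom G "Q Mod ?L" "(\<lambda>q. ?L #>\<^bsub>Q\<^esub> q) \<circ> p"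
    using hom_compose[OF p.homh L.r_coset_hom_Mod] L.factorgroup_is_group
    by (simp add: group_hom_def group_hom_axioms_def)
  have "K \<subseteq> kernel G (Q Mod ?L) ((\<lambda>q. ?L #>\<^bsub>Q\<^esub> q) \<circ> p)"
    using K.subset L.rcos_const[OF p.H.is_group] by (auto simp: kernel_def)
  then obtain \<psi> where \<psi>: "\<psi> \<in> hom (G Mod K) (Q Mod ?L)"
    and \<psi>_coset: "\<And>g. g \<in> carrier G \<Longrightarrow> \<psi> (K #>\<^bsub>G\<^esub> g) = ?L #>\<^bsub>Q\<^esub> p g"
    using \<pi>.FactGroup_universal_kernel[OF assms(2)] by (metis comp_apply)
  have "U \<in> (\<lambda>n. K #>\<^bsub>G\<^esub> i n) ` carrier N" if U: "U \<in> kernel (G Mod K) (Q Mod ?L) \<psi>" for U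
  proof -
    obtain g where g: "g \<in> carrier G" "U = K #>\<^bsub>G\<^esub> g"
      using U by (auto simp: kernel_def carrier_FactGroup)
    then have "?L #>\<^bsub>Q\<^esub> p g = ?L"
      using U \<psi>_coset by (simp add: kernel_def)
    then have "p g \<in> ?L"
      using p.H.rcos_self[OF p.hom_closed[OF g(1)] L.subgroup_axioms] by simp
    with g show ?thesis
      using short_exact_coset_in_image[OF assms] by simp
  qed
  with \<open>?L \<lhd> Q\<close> \<psi> show thesis
    using that by blast
qed

lemma short_exact_linked_embeddings:
  assumes se: "short_exact N G Q i p" and K: "K \<lhd> G"
    and "group H" "group B"
    and \<Phi>: "\<Phi> \<in> hom H (G Mod K)" "inj_on \<Phi> (carrier H)"
    and e: "e \<in> hom A H" "inj_on e (carrier A)" and \<tau>: "\<tau> \<in> hom B H"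
    and link: "\<And>M t. M \<lhd> H \<Longrightarrow> t \<in> carrier B \<Longrightarrow> t \<noteq> \<one>\<^bsub>B\<^esub> \<Longrightarrow> \<tau> t \<in> M \<Longrightarrow> e ` carrier A \<subseteq> M"
  shows "embeds_in_quotient A N \<or> embeds_in_quotient B Q"
proof (rule disjCI)
  assume B_not_embedded: "\<not> embeds_in_quotient B Q"
  obtain L \<psi> where L: "L \<lhd> Q" and \<psi>: "\<psi> \<in> hom (G Mod K) (Q Mod L)"
    and ker_\<psi>: "kernel (G Mod K) (Q Mod L) \<psi> \<subseteq> (\<lambda>n. K #>\<^bsub>G\<^esub> i n) ` carrier N"
    using short_exact_quotient_hom[OF se K] .
  have groups: "group N" "group (G Mod K)" "group (Q Mod L)"
    using se K L by (simp_all add: short_exact_def normal.factorgroup_is_group)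
  interpret \<rho>: group_hom H "Q Mod L" "\<psi> \<circ> \<Phi>"
    using hom_compose[OF \<Phi>(1) \<psi>] assms(3) groups by (simp add: group_hom_def group_hom_axioms_def)
  interpret \<rho>\<tau>: group_hom B "Q Mod L" "\<psi> \<circ> \<Phi> \<circ> \<tau>"
    using hom_compose[OF \<tau> \<rho>.homh] assms(4) groups by (simp add: group_hom_def group_hom_axioms_def)
  have "\<not> inj_on (\<psi> \<circ> \<Phi> \<circ> \<tau>) (carrier B)"
    using B_not_embedded L \<rho>\<tau>.homh unfolding embeds_in_quotient_def by blast
  moreover have "\<one>\<^bsub>B\<^esub> \<in> kernel B (Q Mod L) (\<psi> \<circ> \<Phi> \<circ> \<tau>)"
    using \<rho>\<tau>.hom_one by (simp add: kernel_def)
  ultimately obtain t where "t \<in> kernel B (Q Mod L) (\<psi> \<circ> \<Phi> \<circ> \<tau>)" "t \<noteq> \<one>\<^bsub>B\<^esub>"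
    using \<rho>\<tau>.inj_iff_trivial_ker by blast
  then have "t \<in> carrier B" "t \<noteq> \<one>\<^bsub>B\<^esub>" "\<tau> t \<in> kernel H (Q Mod L) (\<psi> \<circ> \<Phi>)"
    using \<tau> by (auto simp: kernel_def hom_def)
  then have "e ` carrier A \<subseteq> kernel H (Q Mod L) (\<psi> \<circ> \<Phi>)"
    using link \<rho>.normal_kernel by blast
  then have "(\<Phi> \<circ> e) ` carrier A \<subseteq> (\<lambda>n. K #>\<^bsub>G\<^esub> i n) ` carrier N"
    using ker_\<psi> \<Phi>(1) by (fastforce simp: kernel_def hom_def)
  moreover have "(\<lambda>n. K #>\<^bsub>G\<^esub> i n) \<in> hom N (G Mod K)"
    using hom_compose[OF _ normal.r_coset_hom_Mod[OF K]] se
    by (auto simp: short_exact_def comp_def)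
  moreover have "inj_on (\<Phi> \<circ> e) (carrier A)"
    using e \<Phi>(2) by (auto simp: hom_def intro: comp_inj_on inj_on_subset)
  ultimately show "embeds_in_quotient A N"
    using embeds_in_quotient_if_into_hom_image[OF groups(1,2) _ hom_compose[OF e(1) \<Phi>(1)]]
    by blast
qed

lemma carrier_BijGroup_UNIV [simp]: "carrier (BijGroup UNIV) = {f. bij f}"
  by (simp add: BijGroup_def Bij_def)

lemma mult_BijGroup_UNIV [simp]: "bij f \<Longrightarrow> bij g \<Longrightarrow> f \<otimes>\<^bsub>BijGroup UNIV\<^esub> g = f \<circ> g"
  by (simp add: BijGroup_def Bij_def compose_def restrict_UNIV comp_def)

lemma one_BijGroup_UNIV [simp]: "\<one>\<^bsub>BijGroup UNIV\<^esub> = id"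
  by (simp add: BijGroup_def restrict_UNIV id_def)

lemma hom_BijGroup_UNIV_I:
  assumes "group B"
    and mult: "\<And>a b. a \<in> carrier B \<Longrightarrow> b \<in> carrier B \<Longrightarrow> f (a \<otimes>\<^bsub>B\<^esub> b) = f a \<circ> f b"
    and one: "f \<one>\<^bsub>B\<^esub> = id"
  shows "f \<in> hom B (BijGroup UNIV)"
proof -
  interpret group B by fact
  have bij: "bij (f a)" if "a \<in> carrier B" for a
    by (rule o_bij[of "f (inv\<^bsub>B\<^esub> a)"]) (simp_all add: that one flip: mult)
  show ?thesis
    by (rule homI) (simp_all add: bij mult)
qed

definition translate_perm :: "('b, 'm) monoid_scheme \<Rightarrow> 'b \<Rightarrow> 'a \<times> 'b \<times> int \<Rightarrow> 'a \<times> 'b \<times> int" where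
  "translate_perm B t = (\<lambda>(x, y, n). (x, if y \<in> carrier B then t \<otimes>\<^bsub>B\<^esub> y else y, n))"

definition shift_perm :: "('b, 'm) monoid_scheme \<Rightarrow> int \<Rightarrow> 'a \<times> 'b \<times> int \<Rightarrow> 'a \<times> 'b \<times> int" where
  "shift_perm B d = (\<lambda>(x, y, n). (x, y, if y = \<one>\<^bsub>B\<^esub> then n + d else n))"

definition level_perm ::
  "('a, 'm) monoid_scheme \<Rightarrow> ('b, 'n) monoid_scheme \<Rightarrow> int set \<Rightarrow> 'a \<Rightarrow> 'a \<times> 'b \<times> int \<Rightarrow> 'a \<times> 'b \<times> int" where
  "level_perm A B L a =
     (\<lambda>(x, y, n). (if x \<in> carrier A \<and> y = \<one>\<^bsub>B\<^esub> \<and> n \<in> L then a \<otimes>\<^bsub>A\<^esub> x else x, y, n))"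

lemma translate_perm_hom:
  assumes "group B"
  shows "translate_perm B \<in> hom B (BijGroup UNIV)"
proof -
  interpret group B by fact
  show ?thesis
    by (rule hom_BijGroup_UNIV_I[OF assms]) (auto simp: translate_perm_def m_assoc)
qed

lemma shift_perm_hom: "shift_perm B \<in> hom integer_group (BijGroup UNIV)"
  by (rule hom_BijGroup_UNIV_I) (auto simp: shift_perm_def)

lemma level_perm_hom:
  assumes "group A"
  shows "level_perm A B L \<in> hom A (BijGroup UNIV)"
proof -
  interpret group A by fact
  show ?thesis
    by (rule hom_BijGroup_UNIV_I[OF assms]) (auto simp: level_perm_def m_assoc)
qed

lemma bij_translate_perm: "group B \<Longrightarrow> t \<in> carrier B \<Longrightarrow> bij (translate_perm B t)"
  using translate_perm_hom by (fastforce simp: hom_def)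

lemma bij_shift_perm: "bij (shift_perm B d)"
  using shift_perm_hom by (fastforce simp: hom_def)

lemma bij_level_perm: "group A \<Longrightarrow> a \<in> carrier A \<Longrightarrow> bij (level_perm A B L a)"
  using level_perm_hom by (fastforce simp: hom_def)

lemma inj_on_level_perm:
  assumes "group A" "l \<in> L"
  shows "inj_on (level_perm A B L) (carrier A)"
proof (rule inj_onI)
  fix a b assume "a \<in> carrier A" "b \<in> carrier A" "level_perm A B L a = level_perm A B L b"
  then have "level_perm A B L a (\<one>\<^bsub>A\<^esub>, \<one>\<^bsub>B\<^esub>, l) = level_perm A B L b (\<one>\<^bsub>A\<^esub>, \<one>\<^bsub>B\<^esub>, l)"
    by simp
  with \<open>a \<in> carrier A\<close> \<open>b \<in> carrier A\<close> show "a = b"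
    using assms by (simp add: level_perm_def group.is_monoid)
qed

text \<open>The commutator of \<open>shift_perm B 1\<close> and \<open>translate_perm B t\<close> raises the level by one
  on the fibre \<open>y = \<one>\<close> (and lowers it on the fibre \<open>y = t\<close>), so its commutator with the action
  of \<open>a\<inverse>\<close> on the levels \<open>n \<le> 0\<close> is the action of \<open>a\<close> on level 1 alone.\<close>

lemma level_perm_eq_commutator:
  assumes "group A" "group B" "a \<in> carrier A" "t \<in> carrier B" "t \<noteq> \<one>\<^bsub>B\<^esub>"
  shows "level_perm A B {1} a =
    level_perm A B {..0} (inv\<^bsub>A\<^esub> a)
    \<circ> (shift_perm B 1 \<circ> translate_perm B t \<circ> shift_perm B (-1) \<circ> translate_perm B (inv\<^bsub>B\<^esub> t))
    \<circ> level_perm A B {..0} a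
    \<circ> (translate_perm B t \<circ> shift_perm B 1 \<circ> translate_perm B (inv\<^bsub>B\<^esub> t) \<circ> shift_perm B (-1))"
proof -
  interpret A: group A by fact
  interpret B: group B by fact
  have "y = t" if "y \<in> carrier B" "inv\<^bsub>B\<^esub> t \<otimes>\<^bsub>B\<^esub> y = \<one>\<^bsub>B\<^esub>" for y
    using that assms(4) by (metis B.inv_closed B.inv_comm B.inv_equality B.r_inv)
  moreover have "inv\<^bsub>B\<^esub> t \<noteq> \<one>\<^bsub>B\<^esub>"
    using assms(4,5) by (metis B.inv_inv B.inv_one)
  ultimately show ?thesis
    using assms
    by (intro ext) (auto simp: level_perm_def shift_perm_def translate_perm_def
        A.m_assoc[symmetric] B.m_assoc[symmetric])
qed

definition linking_group ::
  "('a, 'm) monoid_scheme \<Rightarrow> ('b, 'n) monoid_scheme \<Rightarrow> ('a \<times> 'b \<times> int \<Rightarrow> 'a \<times> 'b \<times> int) monoid" where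
  "linking_group A B = subgroup_generated (BijGroup UNIV)
     (level_perm A B {1} ` carrier A \<union> level_perm A B {..0} ` carrier A
      \<union> translate_perm B ` carrier B \<union> range (shift_perm B))"

lemma group_linking_group: "group (linking_group A B)"
  unfolding linking_group_def by (rule group.group_subgroup_generated[OF group_BijGroup])

lemma mult_linking_group: "bij f \<Longrightarrow> bij g \<Longrightarrow> f \<otimes>\<^bsub>linking_group A B\<^esub> g = f \<circ> g"
  by (simp add: linking_group_def)

lemma linking_group_homs:
  assumes "group A" "group B"
  shows "level_perm A B {1} \<in> hom A (linking_group A B)"
    and "level_perm A B {..0} \<in> hom A (linking_group A B)"
    and "translate_perm B \<in> hom B (linking_group A B)"
    and "shift_perm B \<in> hom integer_group (linking_group A B)"
  unfolding linking_group_def using assms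
  by (auto intro!: hom_into_subgroup level_perm_hom translate_perm_hom shift_perm_hom)

lemma countable_carrier_linking_group:
  fixes A :: "('a, 'm) monoid_scheme" and B :: "('b, 'n) monoid_scheme"
  assumes "group A" "group B" "countable (carrier A)" "countable (carrier B)"
  shows "countable (carrier (linking_group A B))"
proof -
  let ?gens = "level_perm A B {1} ` carrier A \<union> level_perm A B {..0} ` carrier A
      \<union> translate_perm B ` carrier B \<union> range (shift_perm B)"
  have "?gens \<subseteq> carrier (BijGroup UNIV)"
    using assms(1,2) by (auto simp: bij_level_perm bij_translate_perm bij_shift_perm)
  then show ?thesis
    unfolding linking_group_def carrier_subgroup_generated using assms(3,4)
    by (intro group.countable_generate[OF group_BijGroup]) auto
qed

lemma level_perm_mem_normal_linking_group:
  fixes A :: "('a, 'm) monoid_scheme" and B :: "('b, 'n) monoid_scheme"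
  assumes "group A" "group B" and M: "M \<lhd> linking_group A B"
    and t: "t \<in> carrier B" "t \<noteq> \<one>\<^bsub>B\<^esub>" "translate_perm B t \<in> M"
    and a: "a \<in> carrier A"
  shows "level_perm A B {1} a \<in> M"
proof -
  let ?H = "linking_group A B" and ?g = "level_perm A B {..0}"
    and ?\<tau> = "translate_perm B :: 'b \<Rightarrow> 'a \<times> 'b \<times> int \<Rightarrow> _"
    and ?z = "shift_perm B :: int \<Rightarrow> 'a \<times> 'b \<times> int \<Rightarrow> _"
  interpret A: group A by fact
  interpret B: group B by fact
  interpret H: group ?H by (rule group_linking_group)
  interpret M: normal M ?H by fact
  interpret g: group_hom A ?H ?g
    using linking_group_homs(2)[OF assms(1,2)] by (simp add: group_hom_def group_hom_axioms_def)
  interpret \<tau>: group_hom B ?H ?\<tau>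
    using linking_group_homs(3)[OF assms(1,2)] by (simp add: group_hom_def group_hom_axioms_def)
  interpret z: group_hom integer_group ?H ?z
    using linking_group_homs(4)[OF assms(1,2)] by (simp add: group_hom_def group_hom_axioms_def)
  have inv_int: "inv\<^bsub>integer_group\<^esub> 1 = -1"
    by (rule group.inv_equality) simp_all
  let ?c = "commutator ?H (?z 1) (?\<tau> t)"
  have "commutator ?H (?g (inv\<^bsub>A\<^esub> a)) ?c \<in> M"
    using t a by (intro M.commutator_mem) (auto intro: H.commutator_closed)
  moreover have "inv\<^bsub>?H\<^esub> ?c = commutator ?H (?\<tau> t) (?z 1)"
    using t(1) by (simp add: H.inv_commutator)
  then have "commutator ?H (?g (inv\<^bsub>A\<^esub> a)) ?c = level_perm A B {1} a"
    using level_perm_eq_commutator[OF assms(1,2) a t(1,2)] t(1) a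
    by (simp add: commutator_def mult_linking_group bij_level_perm bij_translate_perm
        bij_shift_perm bij_comp inv_int
        flip: z.hom_inv \<tau>.hom_inv g.hom_inv)
  ultimately show ?thesis
    by simp
qed

theorem lemma1p12:
  fixes N :: "('a, 'x) monoid_scheme" and G :: "('b, 'y) monoid_scheme"
    and Q :: "('c, 'z) monoid_scheme"
  assumes "short_exact N G Q i p"
    and "SQ_universal G"
  shows "SQ_universal N \<or> SQ_universal Q"
proof (rule ccontr)
  assume "\<not> ?thesis"
  then obtain A B :: "nat monoid" where A: "group A" "\<not> embeds_in_quotient A N"
    and B: "group B" "\<not> embeds_in_quotient B Q"
    by (auto simp: SQ_universal_iff_embeds_in_quotient)
  let ?H = "linking_group A B"
  have "countable (carrier ?H)"
    using A(1) B(1) by (simp add: countable_carrier_linking_group)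
  then obtain K \<Phi> where K: "K \<lhd> G" and \<Phi>: "\<Phi> \<in> hom ?H (G Mod K)" "inj_on \<Phi> (carrier ?H)"
    using embeds_in_quotient_if_SQ_universal[OF assms(2) group_linking_group[of A B]]
    by (auto simp: embeds_in_quotient_def)
  have "embeds_in_quotient A N \<or> embeds_in_quotient B Q"
  proof (rule short_exact_linked_embeddings[OF assms(1) K group_linking_group B(1) \<Phi>])
    show "inj_on (level_perm A B {1}) (carrier A)"
      by (rule inj_on_level_perm[OF A(1)]) simp
    show "level_perm A B {1} ` carrier A \<subseteq> M"
      if "M \<lhd> ?H" "t \<in> carrier B" "t \<noteq> \<one>\<^bsub>B\<^esub>" "translate_perm B t \<in> M" for M t
      using level_perm_mem_normal_linking_group[OF A(1) B(1) that] by blast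
  qed (use linking_group_homs[OF A(1) B(1)] in auto)
  with A(2) B(2) show False
    by blast
qed

end
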